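(* Let $q$ be an odd prime power, $g\ge 1$, $X,T$ positive integers, and let $\mathcal{Y}$ be a hyperelliptic curve of genus $g$ over $\mathbb{F}_{q^2}$ with affine equation $y^2=f(x)$, $f(x)=x^{2g+1}+a_{2g}x^{2g}+\dots+a_0\in\mathbb{F}_{q^2}[x]$. Let $J^{\mathcal{Y}}_{\max}$ be the largest integer $J$ for which there exist pairwise distinct $\lambda_1,\dots,\lambda_J\in\mathbb{F}_{q^2}$ with $f(\lambda_j)\ne0$ such that, with $h=\prod_{j=1}^J(x-\lambda_j)$, $\mathcal{Y}$ has at least $2J+X+T+6g+2$ affine $\mathbb{F}_{q^2}$-rational points $P$ with $y(P)\ne 0$, $h(P)\ne 0$, and put $\mathcal{R}^{\mathcal{Y}}_{\max}=\frac{2J^{\mathcal{Y}}_{\max}-g}{2J^{\mathcal{Y}}_{\max}+X+T+5g+2}$. Let $$\mathcal{R}^{\mathcal{H}_q}_{\max}=\frac{L}{L+X+T+3q^2-q-2},\qquad L=mq-\frac{q(q-1)}{2},\quad m=\left\lfloor\frac{q^3-3q^2+q+1-(X+T)}{2q}\right\rfloor.$$ Then $\mathcal{R}^{\mathcal{H}_q}_{\max}>\mathcal{R}^{\mathcal{Y}}_{\max}$ if one of the following holds: (i) $X+T\ge 3(2q+3)$, $g=1$ and $q>31$; (ii) $X+T\ge 3(2q+3)$, $g>1$ and $q>5$.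
   Context: $\mathcal{R}^{\mathcal{Y}}_{\max}$ is the maximal rate of the known $X$-secure $T$-private PIR construction from hyperelliptic curves over $\mathbb{F}_{q^2}$ (rate $L/N$ with $L=2J-g$, $N=L+X+T+6g+2$), and $\mathcal{R}^{\mathcal{H}_q}_{\max}$ is the maximal rate of the PIR construction from the Hermitian curve $X^{q+1}=Y^q+Y$ over $\mathbb{F}_{q^2}$. *)

theory Defs
  imports "HOL-Computational_Algebra.Computational_Algebra" "HOL-Library.Cardinality"
begin

definition good_points :: "'a::field poly \<Rightarrow> 'a set \<Rightarrow> ('a \<times> 'a) set" where
  "good_points f Lam = {(x, y). y ^ 2 = poly f x \<and> y \<noteq> 0 \<and> poly (\<Prod>l\<in>Lam. [:- l, 1:]) x \<noteq> 0}"

definition admissible_J :: "'a::{finite,field} poly \<Rightarrow> nat \<Rightarrow> nat \<Rightarrow> nat \<Rightarrow> nat \<Rightarrow> bool" where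
  "admissible_J f g X T J \<longleftrightarrow>
     (\<exists>lam :: nat \<Rightarrow> 'a. inj_on lam {1..J} \<and> (\<forall>j\<in>{1..J}. poly f (lam j) \<noteq> 0) \<and>
        card (good_points f (lam ` {1..J})) \<ge> 2 * J + X + T + 6 * g + 2)"

definition J_max_Y :: "'a::{finite,field} poly \<Rightarrow> nat \<Rightarrow> nat \<Rightarrow> nat \<Rightarrow> nat" where
  "J_max_Y f g X T = (GREATEST J. admissible_J f g X T J)"

definition R_max_Y :: "'a::{finite,field} poly \<Rightarrow> nat \<Rightarrow> nat \<Rightarrow> nat \<Rightarrow> real" where
  "R_max_Y f g X T =
     (let J = J_max_Y f g X T in
       (2 * real J - real g) / (2 * real J + real X + real T + 5 * real g + 2))"

definition R_max_H :: "nat \<Rightarrow> nat \<Rightarrow> nat \<Rightarrow> real" where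
  "R_max_H q X T =
     (let m = \<lfloor>(real q ^ 3 - 3 * real q ^ 2 + real q + 1 - (real X + real T)) / (2 * real q)\<rfloor>;
          L = real_of_int m * real q - real q * (real q - 1) / 2
      in L / (L + real X + real T + 3 * real q ^ 2 - real q - 2))"

end

theory Submission
  imports Defs
begin

text \<open>Every abscissa outside the \<open>\<lambda>\<^sub>j\<close> carries at most the two points \<open>(x, \<plusminus>y)\<close>, so an
  admissible \<open>J\<close> satisfies \<open>4J + X + T + 6g + 2 \<le> 2q\<^sup>2\<close>. Writing \<open>s = X + T\<close>, this bounds
  the hyperelliptic rate by \<open>(2q\<^sup>2 - s - 8g - 2) / (2q\<^sup>2 + s + 4g + 2)\<close>, while the floor in \<open>m\<close>
  costs less than one, so the Hermitian rate is at least
  \<open>(q\<^sup>3 - 4q\<^sup>2 + 1 - s) / (q\<^sup>3 + 2q\<^sup>2 - 2q - 3 + s)\<close>. After cross-multiplication the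
  \<open>s\<^sup>2\<close> terms cancel; the remaining difference is increasing in \<open>s\<close> and positive at
  \<open>s = 6q + 9\<close> under either hypothesis.\<close>

lemma card_square_roots_le_2: "card {y :: 'a :: idom. y ^ 2 = c} \<le> 2"
proof (cases "\<exists>y0 :: 'a. y0 ^ 2 = c")
  case False
  then show ?thesis by simp
next
  case True
  then obtain y0 :: 'a where "y0 ^ 2 = c" by blast
  then have "{y. y ^ 2 = c} = {y0, - y0}" by (auto simp: power2_eq_iff)
  then show ?thesis by (simp add: card_insert_if)
qed

lemma good_points_subset_Sigma:
  assumes "finite Lam"
  shows "good_points f Lam \<subseteq> Sigma (- Lam) (\<lambda>x. {y. y ^ 2 = poly f x})"
proof (intro subrelI)
  fix x y assume "(x, y) \<in> good_points f Lam"
  then have "poly (\<Prod>l\<in>Lam. [:- l, 1:]) x \<noteq> 0" and on_curve: "y ^ 2 = poly f x"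
    by (auto simp: good_points_def)
  then have "x \<notin> Lam"
    using assms by (auto simp: poly_prod)
  with on_curve show "(x, y) \<in> Sigma (- Lam) (\<lambda>x. {y. y ^ 2 = poly f x})"
    by simp
qed

lemma card_good_points_le:
  fixes f :: "'a :: {finite, field} poly"
  shows "card (good_points f Lam) \<le> 2 * (CARD('a) - card Lam)"
proof -
  have "card (good_points f Lam) \<le> card (Sigma (- Lam) (\<lambda>x. {y. y ^ 2 = poly f x}))"
    by (intro card_mono good_points_subset_Sigma) simp_all
  also have "\<dots> = (\<Sum>x\<in>- Lam. card {y. y ^ 2 = poly f x})"
    by simp
  also have "\<dots> \<le> (\<Sum>x\<in>- Lam. 2)"
    by (intro sum_mono card_square_roots_le_2)
  also have "\<dots> = 2 * (CARD('a) - card Lam)"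
    by (simp add: Compl_eq_Diff_UNIV card_Diff_subset)
  finally show ?thesis .
qed

lemma admissible_J_bound:
  fixes f :: "'a :: {finite, field} poly"
  assumes "admissible_J f g X T J"
  shows "4 * J + X + T + 6 * g + 2 \<le> 2 * CARD('a)"
proof -
  obtain lam :: "nat \<Rightarrow> 'a" where inj: "inj_on lam {1..J}"
    and many: "2 * J + X + T + 6 * g + 2 \<le> card (good_points f (lam ` {1..J}))"
    using assms unfolding admissible_J_def by blast
  have "card (lam ` {1..J}) = J"
    using inj by (simp add: card_image)
  moreover have "card (lam ` {1..J}) \<le> CARD('a)"
    by (rule card_mono) auto
  ultimately show ?thesis
    using many card_good_points_le[of f "lam ` {1..J}"] by linarith
qed

lemma admissible_J_max_Y:
  fixes f :: "'a :: {finite, field} poly"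
  assumes "\<exists>J. admissible_J f g X T J"
  shows "admissible_J f g X T (J_max_Y f g X T)"
  unfolding J_max_Y_def
proof (rule GreatestI_ex_nat[OF assms])
  fix J assume "admissible_J f g X T J"
  from admissible_J_bound[OF this] show "J \<le> 2 * CARD('a)" by linarith
qed

lemma R_max_Y_le:
  fixes f :: "'a :: {finite, field} poly"
  assumes "\<exists>J. admissible_J f g X T J"
  defines "N \<equiv> real CARD('a)" and "s \<equiv> real X + real T"
  shows "R_max_Y f g X T \<le> (2 * N - s - 8 * real g - 2) / (2 * N + s + 4 * real g + 2)"
proof -
  define u where "u = 2 * real (J_max_Y f g X T)"
  define B where "B = s + 6 * real g + 2"
  have "2 * u + B \<le> 2 * N"
    using admissible_J_bound[OF admissible_J_max_Y[OF assms(1)]]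
    unfolding u_def B_def N_def s_def by linarith
  moreover have "B \<ge> 0"
    unfolding B_def s_def by simp
  ultimately have "0 \<le> B * (2 * N - 2 * u - B)"
    by simp
  also have "B * (2 * N - 2 * u - B) = (2 * N - s - 8 * real g - 2) * (u + s + 5 * real g + 2)
      - (u - real g) * (2 * N + s + 4 * real g + 2)"
    unfolding B_def by algebra
  finally have "(u - real g) * (2 * N + s + 4 * real g + 2)
      \<le> (2 * N - s - 8 * real g - 2) * (u + s + 5 * real g + 2)"
    by simp
  moreover have "0 < u + s + 5 * real g + 2" "0 < 2 * N + s + 4 * real g + 2"
    unfolding u_def s_def N_def by simp_all
  ultimately show ?thesis
    unfolding R_max_Y_def Let_def u_def s_def by (simp add: divide_simps algebra_simps)
qed

lemma divide_add_const_mono: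
  fixes x y c :: "'a :: linordered_field"
  assumes "0 \<le> c" and "x \<le> y" and "0 < x + c"
  shows "x / (x + c) \<le> y / (y + c)"
proof -
  have "x * c \<le> y * c"
    using assms by (intro mult_right_mono)
  moreover have "0 < y + c"
    using assms by simp
  ultimately show ?thesis
    using assms by (simp add: divide_simps algebra_simps)
qed

lemma R_max_H_ge:
  fixes q X T :: nat
  assumes "q \<ge> 2"
  defines "s \<equiv> real X + real T"
  shows "(real q ^ 3 - 4 * real q ^ 2 + 1 - s) / (real q ^ 3 + 2 * real q ^ 2 - 2 * real q - 3 + s)
    \<le> R_max_H q X T"
proof -
  define a where "a = real q ^ 3 - 3 * real q ^ 2 + real q + 1 - s"
  define L where "L = real_of_int \<lfloor>a / (2 * real q)\<rfloor> * real q - real q * (real q - 1) / 2"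
  define A where "A = s + 3 * real q ^ 2 - real q - 2"
  define N where "N = real q ^ 3 - 4 * real q ^ 2 + 1 - s"
  have q: "real q \<ge> 2"
    using assms by simp
  then have q2: "real q ^ 2 \<ge> 2 * real q" and q3: "real q ^ 3 \<ge> 2 * real q ^ 2"
    by (simp_all add: power2_eq_square power3_eq_cube)
  have s: "s \<ge> 0"
    unfolding s_def by simp
  have "N + real q ^ 2 - real q = (a / (2 * real q) - 1) * (2 * real q)"
    using q unfolding N_def a_def by (simp add: field_simps power2_eq_square power3_eq_cube)
  also have "\<dots> \<le> real_of_int \<lfloor>a / (2 * real q)\<rfloor> * (2 * real q)"
    using q by (intro mult_right_mono) auto
  also have "\<dots> = 2 * L + real q ^ 2 - real q"
    unfolding L_def by (simp add: field_simps power2_eq_square)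
  finally have "N \<le> 2 * L"
    by simp
  moreover have "0 \<le> 2 * A"
    using q q2 s unfolding A_def by (smt (verit))
  moreover have D: "N + 2 * A = real q ^ 3 + 2 * real q ^ 2 - 2 * real q - 3 + s"
    unfolding N_def A_def by simp
  moreover have "0 < N + 2 * A"
    unfolding D using q q2 q3 s by (smt (verit))
  ultimately have "N / (N + 2 * A) \<le> 2 * L / (2 * L + 2 * A)"
    by (intro divide_add_const_mono)
  also have "\<dots> = R_max_H q X T"
    unfolding R_max_H_def Let_def L_def A_def a_def s_def by (simp add: divide_simps algebra_simps)
  finally have "N / (N + 2 * A) \<le> R_max_H q X T" .
  then show ?thesis
    unfolding D by (simp only: N_def)
qed

lemma hyperelliptic_bound_less_hermitian_bound:
  fixes q g s :: real
  assumes q: "q \<ge> 6" and g: "g \<ge> 1" and qg: "g \<ge> 2 \<or> q \<ge> 32" and s: "s \<ge> 6 * q + 9"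
  shows "(2 * q ^ 2 - s - 8 * g - 2) / (2 * q ^ 2 + s + 4 * g + 2)
    < (q ^ 3 - 4 * q ^ 2 + 1 - s) / (q ^ 3 + 2 * q ^ 2 - 2 * q - 3 + s)"
proof -
  define slope where "slope = q ^ 3 - 3 * q ^ 2 - q + 2 * g - 1"
  define base where "base = (6 * g - 5) * q ^ 3 - 31 * q ^ 2 - 17 * q + 4 * g * q + 8 * g - 11"
  have q2: "q ^ 2 \<ge> 6 * q" and q3: "q ^ 3 \<ge> 6 * q ^ 2"
    using q by (simp_all add: power2_eq_square power3_eq_cube)
  have gq: "g * q \<ge> 0"
    using g q by simp
  have "slope > 0"
    using q q2 q3 g unfolding slope_def by linarith
  moreover have "base > 0"
    using qg
  proof (elim disjE)
    assume "g \<ge> 2"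
    then have "(6 * g - 5) * q ^ 3 \<ge> 7 * q ^ 3"
      using q by (intro mult_right_mono) auto
    then show ?thesis
      using q q2 q3 g gq unfolding base_def by linarith
  next
    assume "q \<ge> 32"
    then have "q ^ 3 \<ge> 32 * q ^ 2" "q ^ 2 \<ge> 32 * q"
      by (simp_all add: power2_eq_square power3_eq_cube)
    moreover have "(6 * g - 5) * q ^ 3 \<ge> q ^ 3"
      using mult_right_mono[of 1 "6 * g - 5" "q ^ 3"] g q by simp
    ultimately show ?thesis
      using q g gq unfolding base_def by linarith
  qed
  ultimately have "0 < 2 * ((s - (6 * q + 9)) * slope + base)"
    using s by (simp add: add_nonneg_pos)
  also have "2 * ((s - (6 * q + 9)) * slope + base)
      = (q ^ 3 - 4 * q ^ 2 + 1 - s) * (2 * q ^ 2 + s + 4 * g + 2)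
        - (2 * q ^ 2 - s - 8 * g - 2) * (q ^ 3 + 2 * q ^ 2 - 2 * q - 3 + s)"
    unfolding slope_def base_def by algebra
  finally have "(2 * q ^ 2 - s - 8 * g - 2) * (q ^ 3 + 2 * q ^ 2 - 2 * q - 3 + s)
      < (q ^ 3 - 4 * q ^ 2 + 1 - s) * (2 * q ^ 2 + s + 4 * g + 2)"
    by simp
  moreover have "0 < 2 * q ^ 2 + s + 4 * g + 2" "0 < q ^ 3 + 2 * q ^ 2 - 2 * q - 3 + s"
    using q q2 q3 g s by linarith+
  ultimately show ?thesis
    by (simp add: divide_simps)
qed

theorem proposition4p9:
  fixes f :: "'a::{finite,field} poly" and q g X T :: nat
  assumes q_pp: "\<exists>p k. prime p \<and> k > 0 \<and> q = p ^ k" and q_odd: "odd q"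
    and card_field: "CARD('a) = q ^ 2"
    and g_pos: "g \<ge> 1" and X_pos: "X > 0" and T_pos: "T > 0"
    and f_monic: "lead_coeff f = 1" and f_deg: "degree f = 2 * g + 1"
    and f_sqf: "squarefree f"
    and J_exists: "\<exists>J. admissible_J f g X T J"
    and cond: "X + T \<ge> 3 * (2 * q + 3) \<and> ((g = 1 \<and> q > 31) \<or> (g > 1 \<and> q > 5))"
  shows "R_max_H q X T > R_max_Y f g X T"
proof -
  define s where "s = real X + real T"
  have q: "real q \<ge> 6" and qg: "real g \<ge> 2 \<or> real q \<ge> 32" and s_ge: "s \<ge> 6 * real q + 9"
    using cond unfolding s_def by auto
  have "R_max_Y f g X T \<le> (2 * real q ^ 2 - s - 8 * real g - 2) / (2 * real q ^ 2 + s + 4 * real g + 2)"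
    using R_max_Y_le[OF J_exists] card_field unfolding s_def by simp
  also have "\<dots> < (real q ^ 3 - 4 * real q ^ 2 + 1 - s) / (real q ^ 3 + 2 * real q ^ 2 - 2 * real q - 3 + s)"
    using hyperelliptic_bound_less_hermitian_bound[OF q _ qg s_ge] g_pos by simp
  also have "\<dots> \<le> R_max_H q X T"
    using R_max_H_ge[of q X T] q unfolding s_def by simp
  finally show ?thesis .
qed

end
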